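(* Let $R$ be a semisimple 2-primal ring. Then $R$ satisfies the complete radical formula, i.e., for every left $R$-module $M$ and every submodule $N$ of $M$, $\langle E_M(N)\rangle=\beta^s_{co}(N)$.
   Context: Rings are associative with identity; modules are unital left modules. $R$ is semisimple if ${}_RR$ is a direct sum of simple submodules; $R$ is 2-primal if its set of nilpotent elements equals its prime radical. A submodule $P$ of $M$ is completely prime if $RM\not\subseteq P$ and for $r\in R$, $m\in M$, $rm\in P$ implies $m\in P$ or $rM\subseteq P$. $\beta^s_{co}(N)$ is the intersection of all completely prime submodules of $M$ containing $N$ ($=M$ if none). $E_M(N)=\{rm: r\in R, m\in M, r^km\in N\text{ for some }k\in\mathbb N\}$ and $\langle E_M(N)\rangle$ is the submodule it generates. *)

theory Defs
  imports Main
begin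

definition lmodule :: "('r::ring_1 \<Rightarrow> 'm::ab_group_add \<Rightarrow> 'm) \<Rightarrow> bool" where
  "lmodule sm \<longleftrightarrow>
     (\<forall>r x y. sm r (x + y) = sm r x + sm r y) \<and>
     (\<forall>r s x. sm (r + s) x = sm r x + sm s x) \<and>
     (\<forall>r s x. sm (r * s) x = sm r (sm s x)) \<and>
     (\<forall>x. sm 1 x = x)"

definition submodule :: "('r::ring_1 \<Rightarrow> 'm::ab_group_add \<Rightarrow> 'm) \<Rightarrow> 'm set \<Rightarrow> bool" where
  "submodule sm N \<longleftrightarrow>
     0 \<in> N \<and> (\<forall>x\<in>N. \<forall>y\<in>N. x + y \<in> N) \<and> (\<forall>x\<in>N. - x \<in> N) \<and>
     (\<forall>r. \<forall>x\<in>N. sm r x \<in> N)"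

definition gen_submodule :: "('r::ring_1 \<Rightarrow> 'm::ab_group_add \<Rightarrow> 'm) \<Rightarrow> 'm set \<Rightarrow> 'm set" where
  "gen_submodule sm X = \<Inter>{N. submodule sm N \<and> X \<subseteq> N}"

definition simple_submodule :: "('r::ring_1 \<Rightarrow> 'm::ab_group_add \<Rightarrow> 'm) \<Rightarrow> 'm set \<Rightarrow> bool" where
  "simple_submodule sm S \<longleftrightarrow> submodule sm S \<and> S \<noteq> {0} \<and>
     (\<forall>T. submodule sm T \<and> T \<subseteq> S \<longrightarrow> T = {0} \<or> T = S)"

definition semisimple_module :: "('r::ring_1 \<Rightarrow> 'm::ab_group_add \<Rightarrow> 'm) \<Rightarrow> bool" where
  "semisimple_module sm \<longleftrightarrow> (\<exists>\<S>.
     (\<forall>S\<in>\<S>. simple_submodule sm S) \<and>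
     gen_submodule sm (\<Union>\<S>) = UNIV \<and>
     (\<forall>S\<in>\<S>. S \<inter> gen_submodule sm (\<Union>(\<S> - {S})) = {0}))"

definition semisimple_ring :: "'r::ring_1 itself \<Rightarrow> bool" where
  "semisimple_ring _ \<longleftrightarrow> semisimple_module ((*) :: 'r \<Rightarrow> 'r \<Rightarrow> 'r)"

definition ideal2 :: "'r::ring_1 set \<Rightarrow> bool" where
  "ideal2 I \<longleftrightarrow> 0 \<in> I \<and> (\<forall>x\<in>I. \<forall>y\<in>I. x + y \<in> I) \<and> (\<forall>x\<in>I. - x \<in> I) \<and>
     (\<forall>r. \<forall>x\<in>I. r * x \<in> I \<and> x * r \<in> I)"

definition prime_ideal2 :: "'r::ring_1 set \<Rightarrow> bool" where
  "prime_ideal2 P \<longleftrightarrow> ideal2 P \<and> P \<noteq> UNIV \<and>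
     (\<forall>a b. (\<forall>r. a * r * b \<in> P) \<longrightarrow> a \<in> P \<or> b \<in> P)"

definition prime_radical :: "'r::ring_1 itself \<Rightarrow> 'r set" where
  "prime_radical _ = \<Inter>{P :: 'r set. prime_ideal2 P}"

definition two_primal :: "'r::ring_1 itself \<Rightarrow> bool" where
  "two_primal T \<longleftrightarrow> {x :: 'r. \<exists>n. x ^ n = 0} = prime_radical T"

definition completely_prime_submodule ::
  "('r::ring_1 \<Rightarrow> 'm::ab_group_add \<Rightarrow> 'm) \<Rightarrow> 'm set \<Rightarrow> bool" where
  "completely_prime_submodule sm P \<longleftrightarrow> submodule sm P \<and>
     \<not> (gen_submodule sm {sm r x | r x. True} \<subseteq> P) \<and>
     (\<forall>r x. sm r x \<in> P \<longrightarrow> x \<in> P \<or> (\<forall>y. sm r y \<in> P))"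

definition beta_co :: "('r::ring_1 \<Rightarrow> 'm::ab_group_add \<Rightarrow> 'm) \<Rightarrow> 'm set \<Rightarrow> 'm set" where
  "beta_co sm N = \<Inter>{P. completely_prime_submodule sm P \<and> N \<subseteq> P}"

definition E_M :: "('r::ring_1 \<Rightarrow> 'm::ab_group_add \<Rightarrow> 'm) \<Rightarrow> 'm set \<Rightarrow> 'm set" where
  "E_M sm N = {sm r x | r x. \<exists>k::nat. 0 < k \<and> sm (r ^ k) x \<in> N}"

end

theory Submission
  imports Defs
begin

text \<open>
  Every completely prime submodule containing \<open>N\<close> contains \<open>E_M(N)\<close>, so
  \<open>\<langle>E_M(N)\<rangle> \<subseteq> \<beta>\<^sup>s\<^sub>c\<^sub>o(N)\<close>; and \<open>N \<subseteq> \<langle>E_M(N)\<rangle>\<close> trivially. It remains to see that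
  \<open>N\<close> is an intersection of completely prime submodules. A semisimple ring has no
  nonzero nil ideal, so a 2-primal semisimple ring is reduced. In a reduced ring
  idempotents are central, and every minimal left ideal is \<open>Re\<close> for a central
  idempotent \<open>e\<close> such that \<open>eR\<close> is a division ring with unit \<open>e\<close>. Given \<open>x \<notin> N\<close>, some
  minimal left ideal \<open>Re\<close> satisfies \<open>ex \<notin> N\<close>, and then \<open>{y. ey \<in> N}\<close> is a completely
  prime submodule containing \<open>N\<close> but not \<open>x\<close>.
\<close>

definition reduced :: "'r::ring_1 itself \<Rightarrow> bool" where
  "reduced _ \<longleftrightarrow> (\<forall>x::'r. x * x = 0 \<longrightarrow> x = 0)"

lemma gen_submodule_least: "submodule sm Q \<Longrightarrow> X \<subseteq> Q \<Longrightarrow> gen_submodule sm X \<subseteq> Q"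
  unfolding gen_submodule_def by auto

lemma gen_submodule_superset: "X \<subseteq> gen_submodule sm X"
  unfolding gen_submodule_def by auto

lemma simple_submoduleD:
  assumes "simple_submodule sm S" "submodule sm T" "T \<subseteq> S" "z \<in> T" "z \<noteq> 0"
  shows "T = S"
  using assms unfolding simple_submodule_def by blast

lemma submodule_smult: "submodule sm S \<Longrightarrow> x \<in> S \<Longrightarrow> sm r x \<in> S"
  unfolding submodule_def by blast

lemma submodule_diff: "submodule sm S \<Longrightarrow> x \<in> S \<Longrightarrow> y \<in> S \<Longrightarrow> x - y \<in> S"
  unfolding submodule_def by (metis diff_conv_add_uminus)

lemma submodule_Int: "submodule sm S \<Longrightarrow> submodule sm T \<Longrightarrow> submodule sm (S \<inter> T)"
  unfolding submodule_def by auto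

lemma lmodule_mult: "lmodule ((*) :: 'r::ring_1 \<Rightarrow> 'r \<Rightarrow> 'r)"
  unfolding lmodule_def by (simp add: distrib_left distrib_right mult.assoc)

context
  fixes sm :: "'r::ring_1 \<Rightarrow> 'm::ab_group_add \<Rightarrow> 'm"
  assumes lm: "lmodule sm"
begin

lemma sm_add_right: "sm r (x + y) = sm r x + sm r y"
  and sm_add_left: "sm (r + s) x = sm r x + sm s x"
  and sm_mult: "sm (r * s) x = sm r (sm s x)"
  and sm_one [simp]: "sm 1 x = x"
  using lm unfolding lmodule_def by auto

lemma sm_zero_right [simp]: "sm r 0 = 0"
  using sm_add_right[of r 0 0] by simp

lemma sm_zero_left [simp]: "sm 0 x = 0"
  using sm_add_left[of 0 0 x] by simp

lemma sm_minus_left: "sm (- r) x = - sm r x"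
  using sm_add_left[of r "- r" x] by (simp add: eq_neg_iff_add_eq_0 add.commute)

lemma sm_minus_right: "sm r (- x) = - sm r x"
  using sm_add_right[of r x "- x"] by (simp add: eq_neg_iff_add_eq_0 add.commute)

lemma sm_sum_list: "sm r (sum_list xs) = sum_list (map (sm r) xs)"
  by (induction xs) (simp_all add: sm_add_right)

lemma gen_submodule_Union_subset_sum_list:
  assumes "\<forall>S\<in>\<S>. submodule sm S"
  shows "gen_submodule sm (\<Union>\<S>) \<subseteq> {sum_list xs | xs. set xs \<subseteq> \<Union>\<S>}"
proof -
  define Q where "Q = {sum_list xs | xs. set xs \<subseteq> \<Union>\<S>}"
  have map_closed: "sum_list (map f xs) \<in> Q"
    if xs: "set xs \<subseteq> \<Union>\<S>" and f: "\<And>S z. S \<in> \<S> \<Longrightarrow> z \<in> S \<Longrightarrow> f z \<in> S" for f xs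
  proof -
    have "f z \<in> \<Union>\<S>" if "z \<in> set xs" for z
    proof -
      obtain S where "S \<in> \<S>" "z \<in> S" using xs \<open>z \<in> set xs\<close> by blast
      then show ?thesis using f by blast
    qed
    then have "set (map f xs) \<subseteq> \<Union>\<S>" by auto
    then show ?thesis unfolding Q_def by blast
  qed
  have "0 \<in> Q" unfolding Q_def by (intro CollectI exI[of _ "[]"]) simp
  moreover have "x + y \<in> Q" if xy: "x \<in> Q" "y \<in> Q" for x y
  proof -
    obtain xs ys where "set xs \<subseteq> \<Union>\<S>" "x = sum_list xs" "set ys \<subseteq> \<Union>\<S>" "y = sum_list ys"
      using xy unfolding Q_def by blast
    then show ?thesis unfolding Q_def by (intro CollectI exI[of _ "xs @ ys"]) simp
  qed
  moreover have "- x \<in> Q" "sm r x \<in> Q" if x: "x \<in> Q" for r x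
  proof -
    obtain xs where xs: "set xs \<subseteq> \<Union>\<S>" "x = sum_list xs" using x unfolding Q_def by blast
    have "- z \<in> S" "sm r z \<in> S" if "S \<in> \<S>" "z \<in> S" for z S
      using assms that unfolding submodule_def by blast+
    then have "sum_list (map uminus xs) \<in> Q" "sum_list (map (sm r) xs) \<in> Q"
      using map_closed[OF xs(1)] by blast+
    moreover have "sum_list (map uminus xs) = - x"
      unfolding xs(2) by (induction xs) simp_all
    ultimately show "- x \<in> Q" "sm r x \<in> Q" by (simp_all add: xs(2) sm_sum_list)
  qed
  ultimately have "submodule sm Q"
    unfolding submodule_def by blast
  moreover have "\<Union>\<S> \<subseteq> Q"
  proof
    fix z assume "z \<in> \<Union>\<S>"
    then show "z \<in> Q" unfolding Q_def by (intro CollectI exI[of _ "[z]"]) simp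
  qed
  ultimately show ?thesis unfolding Q_def by (rule gen_submodule_least)
qed

lemma simple_submodule_eq_cyclic:
  assumes "simple_submodule sm S" "x \<in> S" "x \<noteq> 0"
  shows "range (\<lambda>r. sm r x) = S"
proof (rule simple_submoduleD[OF assms(1)])
  show "submodule sm (range (\<lambda>r. sm r x))"
    unfolding submodule_def
    by (auto simp: sm_mult[symmetric] sm_add_left[symmetric] sm_minus_left[symmetric]
        intro: range_eqI[of _ _ 0])
  show "range (\<lambda>r. sm r x) \<subseteq> S"
    using assms unfolding simple_submodule_def submodule_def by auto
  show "x \<in> range (\<lambda>r. sm r x)" using range_eqI[of x "\<lambda>r. sm r x" 1] by simp
qed (fact assms(3))

lemma annihilator_left_ideal:
  assumes "submodule sm N"
  shows "submodule (*) {r. sm r x \<in> N}"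
  using assms unfolding submodule_def by (simp add: sm_add_left sm_minus_left sm_mult)

lemma completely_prime_pow:
  assumes "completely_prime_submodule sm P" "0 < k" "sm (r ^ k) x \<in> P"
  shows "sm r x \<in> P"
  using assms(2,3)
proof (induction k rule: nat_induct_non_zero)
  case (Suc j)
  then have "sm r (sm (r ^ j) x) \<in> P" by (simp add: sm_mult)
  then have "sm (r ^ j) x \<in> P \<or> (\<forall>y. sm r y \<in> P)"
    using assms(1) unfolding completely_prime_submodule_def by blast
  then show ?case using Suc.IH by blast
qed simp

lemma E_M_subset_completely_prime:
  assumes "completely_prime_submodule sm P" "N \<subseteq> P"
  shows "E_M sm N \<subseteq> P"
  unfolding E_M_def using completely_prime_pow[OF assms(1)] assms(2) by blast

lemma gen_E_M_subset_beta_co: "gen_submodule sm (E_M sm N) \<subseteq> beta_co sm N"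
  unfolding beta_co_def
proof (rule Inter_greatest)
  fix P assume "P \<in> {P. completely_prime_submodule sm P \<and> N \<subseteq> P}"
  then have P: "completely_prime_submodule sm P" "N \<subseteq> P" by simp_all
  then have "submodule sm P" unfolding completely_prime_submodule_def by blast
  moreover have "E_M sm N \<subseteq> P" using P by (rule E_M_subset_completely_prime)
  ultimately show "gen_submodule sm (E_M sm N) \<subseteq> P" by (rule gen_submodule_least)
qed

lemma subset_gen_E_M: "N \<subseteq> gen_submodule sm (E_M sm N)"
proof -
  have "x \<in> E_M sm N" if "x \<in> N" for x
    unfolding E_M_def using that by (intro CollectI exI[of _ 1] exI[of _ x] conjI) simp_all
  then show ?thesis using gen_submodule_superset by blast
qed

text \<open>The hypothesis on \<open>e\<close> says that \<open>e\<close> is central and a left unit for every nonzero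
  element of \<open>eR\<close>, i.e. \<open>eR\<close> is a division ring with unit \<open>e\<close>.\<close>

lemma completely_prime_preimage:
  assumes N: "submodule sm N"
    and central: "\<And>r. e * r = r * e"
    and division: "\<And>r. e * r \<noteq> 0 \<Longrightarrow> \<exists>u. u * (e * r) = e"
    and x: "sm e x \<notin> N"
  shows "completely_prime_submodule sm {y. sm e y \<in> N}" (is "completely_prime_submodule sm ?P")
  unfolding completely_prime_submodule_def
proof (intro conjI allI impI)
  have "sm e (sm r y) \<in> N" if "sm e y \<in> N" for r y
  proof -
    have "sm e (sm r y) = sm r (sm e y)"
      by (simp only: sm_mult[symmetric] central)
    with submodule_smult[OF N that] show ?thesis by (simp only:)
  qed
  then show "submodule sm ?P"
    using N unfolding submodule_def by (simp add: sm_add_right sm_minus_right)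
  have "x \<in> gen_submodule sm {sm r y | r y. True}"
    using gen_submodule_superset by (force intro!: exI[of _ 1])
  with x show "\<not> gen_submodule sm {sm r y | r y. True} \<subseteq> ?P" by blast
next
  fix r y assume "sm r y \<in> ?P"
  then have ery: "sm (e * r) y \<in> N" by (simp add: sm_mult)
  show "y \<in> ?P \<or> (\<forall>z. sm r z \<in> ?P)"
  proof (cases "e * r = 0")
    case True
    then have "sm e (sm r z) = 0" for z by (simp only: sm_mult[symmetric] sm_zero_left)
    then show ?thesis using N unfolding submodule_def by simp
  next
    case False
    then obtain u where "u * (e * r) = e" using division by blast
    then have "sm e y = sm u (sm (e * r) y)" using sm_mult[of u "e * r" y] by simp
    with submodule_smult[OF N ery] show ?thesis by simp
  qed
qed

end

lemma ideal2_Inter: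
  assumes "\<And>I. I \<in> \<I> \<Longrightarrow> ideal2 I"
  shows "ideal2 (\<Inter>\<I>)"
  unfolding ideal2_def
proof (intro conjI ballI allI)
  fix x y r assume x: "x \<in> \<Inter>\<I>" and y: "y \<in> \<Inter>\<I>"
  show "x + y \<in> \<Inter>\<I>" "- x \<in> \<Inter>\<I>" "r * x \<in> \<Inter>\<I>" "x * r \<in> \<Inter>\<I>"
    using assms x y unfolding ideal2_def by simp_all
qed (use assms ideal2_def in blast)

lemma two_primal_nil_ideal:
  assumes "two_primal TYPE('r::ring_1)"
  shows "ideal2 {x :: 'r. \<exists>n. x ^ n = 0}"
proof -
  have "{x :: 'r. \<exists>n. x ^ n = 0} = \<Inter>{P. prime_ideal2 P}"
    using assms unfolding two_primal_def prime_radical_def by simp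
  moreover have "ideal2 (\<Inter>{P :: 'r set. prime_ideal2 P})"
    by (rule ideal2_Inter) (simp add: prime_ideal2_def)
  ultimately show ?thesis by simp
qed

lemma ideal2_imp_submodule: "ideal2 I \<Longrightarrow> submodule (*) I"
  unfolding ideal2_def submodule_def by blast

lemma ideal2_mult_right: "ideal2 I \<Longrightarrow> x \<in> I \<Longrightarrow> x * r \<in> I"
  unfolding ideal2_def by blast

lemma sum_list_in_ideal2: "ideal2 I \<Longrightarrow> set xs \<subseteq> I \<Longrightarrow> sum_list xs \<in> I"
  by (induction xs) (auto simp: ideal2_def)

lemma mult_sum_list_filter:
  fixes a :: "'r::ring_1"
  assumes "\<forall>z\<in>set xs. \<not> P z \<longrightarrow> a * z = 0"
  shows "a * sum_list xs = a * sum_list (filter P xs)"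
  using assms by (induction xs) (auto simp: distrib_left)

lemma idempotent_nilpotent_eq_zero:
  fixes e :: "'r::ring_1"
  assumes "e * e = e" "e ^ n = 0"
  shows "e = 0"
proof -
  have "e ^ Suc k = e" for k
    by (induction k) (simp_all add: assms(1) mult.assoc[symmetric])
  then have "e = e * e ^ n" by (metis power_Suc)
  then show ?thesis using assms(2) by simp
qed

text \<open>Write \<open>1 = \<Sum> z\<^sub>i\<close> with each \<open>z\<^sub>i\<close> in a minimal left ideal \<open>S\<^sub>i\<close>. For \<open>a \<in> I\<close> either
  \<open>z\<^sub>i \<in> I\<close> or \<open>a z\<^sub>i = 0\<close>, because \<open>S\<^sub>i \<inter> I\<close> is \<open>0\<close> or \<open>S\<^sub>i\<close>. Hence \<open>a = a f\<close> for
  \<open>f = \<Sum>\<^bsub>z\<^sub>i \<in> I\<^esub> z\<^sub>i \<in> I\<close>; so \<open>f\<close> is a nilpotent idempotent, \<open>f = 0\<close> and \<open>a = 0\<close>.\<close>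

lemma semisimple_nil_ideal_eq_zero:
  fixes I :: "'r::ring_1 set"
  assumes "semisimple_ring TYPE('r)" "ideal2 I" "\<forall>a\<in>I. \<exists>n. a ^ n = 0" "a \<in> I"
  shows "a = 0"
proof -
  obtain \<S> where simple: "\<forall>S\<in>\<S>. simple_submodule ((*) :: 'r \<Rightarrow> 'r \<Rightarrow> 'r) S"
    and gen: "gen_submodule ((*) :: 'r \<Rightarrow> 'r \<Rightarrow> 'r) (\<Union>\<S>) = UNIV"
    using assms(1) unfolding semisimple_ring_def semisimple_module_def by blast
  have "\<forall>S\<in>\<S>. submodule (*) S" using simple unfolding simple_submodule_def by blast
  then have "gen_submodule (*) (\<Union>\<S>) \<subseteq> {sum_list xs | xs. set xs \<subseteq> \<Union>\<S>}"
    by (rule gen_submodule_Union_subset_sum_list[OF lmodule_mult])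
  then have "(1 :: 'r) \<in> {sum_list xs | xs. set xs \<subseteq> \<Union>\<S>}" by (rule subsetD) (simp add: gen)
  then obtain zs where zs: "set zs \<subseteq> \<Union>\<S>" "sum_list zs = (1 :: 'r)" by auto
  define f where "f = sum_list (filter (\<lambda>z. z \<in> I) zs)"
  have f: "f \<in> I" unfolding f_def using assms(2) by (intro sum_list_in_ideal2) auto
  have absorb: "b = b * f" if "b \<in> I" for b
  proof -
    have "b * z = 0" if "z \<in> set zs" "z \<notin> I" for z
    proof (rule ccontr)
      assume bz: "b * z \<noteq> 0"
      obtain S where S: "S \<in> \<S>" "z \<in> S" using zs(1) \<open>z \<in> set zs\<close> by blast
      then have simple_S: "simple_submodule (*) S" using simple by blast
      then have sub: "submodule (*) S" unfolding simple_submodule_def by blast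
      have SI: "submodule (*) (S \<inter> I)"
        using sub ideal2_imp_submodule[OF assms(2)] by (rule submodule_Int)
      have "b * z \<in> S \<inter> I"
        using submodule_smult[OF sub S(2)] ideal2_mult_right[OF assms(2) \<open>b \<in> I\<close>] by blast
      then have "S \<inter> I = S" by (rule simple_submoduleD[OF simple_S SI Int_lower1 _ bz])
      then show False using S(2) \<open>z \<notin> I\<close> by blast
    qed
    then have "b * sum_list zs = b * f"
      unfolding f_def by (intro mult_sum_list_filter) blast
    then show ?thesis using zs(2) by simp
  qed
  obtain n where "f ^ n = 0" using f assms(3) by blast
  with absorb[OF f, symmetric] have "f = 0" by (rule idempotent_nilpotent_eq_zero)
  with absorb[OF assms(4)] show ?thesis by simp
qed

lemma semisimple_two_primal_reduced:
  assumes "semisimple_ring TYPE('r::ring_1)" "two_primal TYPE('r)"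
  shows "reduced TYPE('r)"
  unfolding reduced_def
proof (intro allI impI)
  fix x :: 'r assume "x * x = 0"
  then have "x ^ 2 = 0" by (simp add: power2_eq_square)
  then show "x = 0"
    using semisimple_nil_ideal_eq_zero[OF assms(1) two_primal_nil_ideal[OF assms(2)]] by blast
qed

lemma reducedD: "reduced TYPE('r::ring_1) \<Longrightarrow> (x :: 'r) * x = 0 \<Longrightarrow> x = 0"
  unfolding reduced_def by blast

lemma reduced_mult_eq_zero_swap:
  fixes a b :: "'r::ring_1"
  assumes "reduced TYPE('r)" "a * b = 0"
  shows "b * a = 0"
proof (rule reducedD[OF assms(1)])
  have "(b * a) * (b * a) = b * (a * b) * a" by (simp add: mult.assoc)
  with assms(2) show "(b * a) * (b * a) = 0" by simp
qed

text \<open>Both \<open>re - ere\<close> and \<open>er - ere\<close> square to zero.\<close>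

lemma reduced_idempotent_central:
  fixes e :: "'r::ring_1"
  assumes red: "reduced TYPE('r)" and ee: "e * e = e"
  shows "e * r = r * e"
proof -
  have ee': "e * (e * y) = e * y" for y by (simp add: mult.assoc[symmetric] ee)
  define c where "c = r * e - e * r * e"
  have ce: "c * e = c" unfolding c_def by (simp add: left_diff_distrib mult.assoc ee)
  have ec: "e * c = 0" unfolding c_def by (simp add: right_diff_distrib mult.assoc ee ee')
  have "c * c = 0" by (metis ce ec mult.assoc mult_zero_right)
  then have "c = 0" by (rule reducedD[OF red])
  then have c: "r * e = e * r * e" unfolding c_def by simp
  define d where "d = e * r - e * r * e"
  have ed: "e * d = d" unfolding d_def by (simp add: right_diff_distrib mult.assoc ee ee')
  have de: "d * e = 0" unfolding d_def by (simp add: left_diff_distrib mult.assoc ee)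
  have "d * d = 0" by (metis ed de mult.assoc mult_zero_left)
  then have "d = 0" by (rule reducedD[OF red])
  then have "e * r = e * r * e" unfolding d_def by simp
  with c show ?thesis by simp
qed

text \<open>If \<open>0 \<noteq> s \<in> S\<close> then \<open>s\<^sup>2 \<noteq> 0\<close>, so \<open>s = t s\<^sup>2\<close> and \<open>e = t s\<close> satisfies \<open>e s = s\<close>;
  \<open>e\<^sup>2 - e \<in> S = Rs\<close> is killed on the right by \<open>s\<close>, hence vanishes in a reduced ring.\<close>

lemma reduced_simple_left_ideal_idempotent:
  fixes S :: "'r::ring_1 set"
  assumes red: "reduced TYPE('r)" and S: "simple_submodule (*) S"
  obtains e where "e * e = e" "e \<noteq> 0" "S = range (\<lambda>r. r * e)"
proof -
  note cyclic = simple_submodule_eq_cyclic[OF lmodule_mult S]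
  have sub: "submodule (*) S" using S unfolding simple_submodule_def by blast
  have "S \<noteq> {0}" "0 \<in> S" using S unfolding simple_submodule_def submodule_def by blast+
  then obtain s where s: "s \<in> S" "s \<noteq> 0" by blast
  have "s * s \<noteq> 0" using reducedD[OF red] s(2) by blast
  with submodule_smult[OF sub s(1)] have "range (\<lambda>r. r * (s * s)) = S" by (rule cyclic)
  with s(1) obtain t where "s = t * (s * s)" by (metis rangeE)
  define e where "e = t * s"
  have es: "e * s = s" unfolding e_def using \<open>s = t * (s * s)\<close> by (metis mult.assoc)
  have "e \<in> S" unfolding e_def by (rule submodule_smult[OF sub s(1)])
  then have "e * e - e \<in> S" by (intro submodule_diff[OF sub] submodule_smult[OF sub])
  then obtain u where u: "e * e - e = u * s" using cyclic[OF s] by (metis rangeE)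
  have "(e * e - e) * s = 0" by (simp add: left_diff_distrib mult.assoc es)
  then have "u * s * s = 0" by (simp add: u)
  then have "s * (u * s) = 0" by (rule reduced_mult_eq_zero_swap[OF red])
  then have "(u * s) * (u * s) = 0" by (simp add: mult.assoc)
  then have "u * s = 0" by (rule reducedD[OF red])
  then have "e * e = e" using u by simp
  moreover have "e \<noteq> 0" using es s(2) by auto
  ultimately show ?thesis using cyclic[OF \<open>e \<in> S\<close>] that by blast
qed

lemma reduced_simple_left_ideal:
  fixes S :: "'r::ring_1 set"
  assumes red: "reduced TYPE('r)" and S: "simple_submodule (*) S"
  obtains e where "S = range (\<lambda>r. r * e)" "\<And>r. e * r = r * e"
    "\<And>r. e * r \<noteq> 0 \<Longrightarrow> \<exists>u. u * (e * r) = e"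
proof -
  obtain e where ee: "e * e = e" and S_eq: "S = range (\<lambda>r. r * e)"
    using reduced_simple_left_ideal_idempotent[OF assms] by blast
  note central = reduced_idempotent_central[OF red ee]
  have "\<exists>u. u * (e * r) = e" if "e * r \<noteq> 0" for r
  proof -
    have "e \<in> S" unfolding S_eq using range_eqI[of e "\<lambda>r. r * e" 1] by simp
    have "r * e \<in> S" unfolding S_eq by (rule rangeI)
    moreover have "r * e \<noteq> 0" using that central[of r] by simp
    ultimately have "range (\<lambda>u. u * (r * e)) = S"
      by (rule simple_submodule_eq_cyclic[OF lmodule_mult S])
    with \<open>e \<in> S\<close> obtain u where "e = u * (r * e)" by (metis rangeE)
    then show ?thesis using central[of r] by metis
  qed
  with S_eq central that show ?thesis by blast
qed

lemma completely_prime_avoiding: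
  fixes sm :: "'r::ring_1 \<Rightarrow> 'm::ab_group_add \<Rightarrow> 'm"
  assumes ss: "semisimple_ring TYPE('r)" and red: "reduced TYPE('r)"
    and lm: "lmodule sm" and N: "submodule sm N" and x: "x \<notin> N"
  obtains P where "completely_prime_submodule sm P" "N \<subseteq> P" "x \<notin> P"
proof -
  obtain \<S> where simple: "\<forall>S\<in>\<S>. simple_submodule ((*) :: 'r \<Rightarrow> 'r \<Rightarrow> 'r) S"
    and gen: "gen_submodule ((*) :: 'r \<Rightarrow> 'r \<Rightarrow> 'r) (\<Union>\<S>) = UNIV"
    using ss unfolding semisimple_ring_def semisimple_module_def by blast
  have "\<not> \<Union>\<S> \<subseteq> {r. sm r x \<in> N}"
  proof
    assume "\<Union>\<S> \<subseteq> {r. sm r x \<in> N}"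
    then have "gen_submodule (*) (\<Union>\<S>) \<subseteq> {r. sm r x \<in> N}"
      by (rule gen_submodule_least[OF annihilator_left_ideal[OF lm N]])
    then have "(1 :: 'r) \<in> {r. sm r x \<in> N}" by (rule subsetD) (simp add: gen)
    with x show False by (simp add: sm_one[OF lm])
  qed
  then obtain S s where S: "S \<in> \<S>" "s \<in> S" "sm s x \<notin> N" by blast
  obtain e where e: "S = range (\<lambda>r. r * e)" "\<And>r. e * r = r * e"
    "\<And>r. e * r \<noteq> 0 \<Longrightarrow> \<exists>u. u * (e * r) = e"
    using reduced_simple_left_ideal[OF red] simple S(1) by blast
  have ex: "sm e x \<notin> N"
  proof
    assume "sm e x \<in> N"
    obtain r where "s = r * e" using S(2) unfolding e(1) by blast
    then have "sm s x = sm r (sm e x)" by (simp add: sm_mult[OF lm])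
    with submodule_smult[OF N \<open>sm e x \<in> N\<close>] S(3) show False by simp
  qed
  show ?thesis
  proof
    show "completely_prime_submodule sm {y. sm e y \<in> N}"
      by (rule completely_prime_preimage[OF lm N e(2,3) ex])
    show "N \<subseteq> {y. sm e y \<in> N}" using submodule_smult[OF N] by blast
    show "x \<notin> {y. sm e y \<in> N}" using ex by simp
  qed
qed

lemma semisimple_reduced_beta_co_subset:
  fixes sm :: "'r::ring_1 \<Rightarrow> 'm::ab_group_add \<Rightarrow> 'm"
  assumes "semisimple_ring TYPE('r)" "reduced TYPE('r)" "lmodule sm" "submodule sm N"
  shows "beta_co sm N \<subseteq> N"
proof
  fix x assume x: "x \<in> beta_co sm N"
  show "x \<in> N"
  proof (rule ccontr)
    assume "x \<notin> N"
    then obtain P where "completely_prime_submodule sm P" "N \<subseteq> P" "x \<notin> P"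
      by (rule completely_prime_avoiding[OF assms])
    with x show False unfolding beta_co_def by blast
  qed
qed

theorem corollary4p24:
  fixes sm :: "'r::ring_1 \<Rightarrow> 'm::ab_group_add \<Rightarrow> 'm"
    and N :: "'m set"
  assumes "semisimple_ring TYPE('r)"
    and "two_primal TYPE('r)"
    and "lmodule sm"
    and "submodule sm N"
  shows "gen_submodule sm (E_M sm N) = beta_co sm N"
proof -
  have "reduced TYPE('r)" using assms(1,2) by (rule semisimple_two_primal_reduced)
  then have "beta_co sm N \<subseteq> N"
    using semisimple_reduced_beta_co_subset assms(1,3,4) by blast
  with gen_E_M_subset_beta_co[OF assms(3)] subset_gen_E_M[OF assms(3)] show ?thesis
    by blast
qed

end
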